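(* For each positive integer $n$, let $P_n=(n, n-1,\ldots,1)$. Then the pair $(P_n,P_n)$ is bigraphic, and every bipartite graph realizing $(P_n,P_n)$ is a mirror bipartite graph; that is, $\mathrm{Bipp}(P_n,P_n)=\mathrm{Mirr}(P_n,P_n)$.
   Context: For sequences $P,Q$ of nonnegative integers, a bipartite graph $G=(V_1\cup V_2,E)$ (with stable sets $V_1,V_2$) realizes $(P,Q)$ if the degrees of the vertices of $V_1$ are the elements of $P$ and the degrees of the vertices of $V_2$ are the elements of $Q$; $(P,Q)$ is bigraphic if such a $G$ exists. A bipartite graph $G=(V_1\cup V_2,E)$ is mirror if there is a bijection $\varphi:V_1\to V_2$ with $u\varphi(v)\in E \iff \varphi(u)v\in E$ for all $u,v\in V_1$. $\mathrm{Bipp}(P,P)$ denotes the set of bipartite graphs (up to isomorphism) realizing $(P,P)$, and $\mathrm{Mirr}(P,P)$ the set of mirror bipartite graphs (up to isomorphism) realizing $(P,P)$. *)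

theory Defs
  imports Main "HOL-Library.Multiset"
begin

definition bipartite_graph :: "'a set \<Rightarrow> 'a set \<Rightarrow> ('a \<times> 'a) set \<Rightarrow> bool" where
  "bipartite_graph V1 V2 E \<longleftrightarrow> finite V1 \<and> finite V2 \<and> V1 \<inter> V2 = {} \<and> E \<subseteq> V1 \<times> V2"

definition deg1 :: "('a \<times> 'a) set \<Rightarrow> 'a \<Rightarrow> nat" where
  "deg1 E u = card {w. (u, w) \<in> E}"

definition deg2 :: "('a \<times> 'a) set \<Rightarrow> 'a \<Rightarrow> nat" where
  "deg2 E w = card {u. (u, w) \<in> E}"

definition realizes :: "'a set \<Rightarrow> 'a set \<Rightarrow> ('a \<times> 'a) set \<Rightarrow> nat list \<Rightarrow> nat list \<Rightarrow> bool" where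
  "realizes V1 V2 E P Q \<longleftrightarrow> bipartite_graph V1 V2 E
     \<and> image_mset (deg1 E) (mset_set V1) = mset P
     \<and> image_mset (deg2 E) (mset_set V2) = mset Q"

definition bigraphic :: "nat list \<Rightarrow> nat list \<Rightarrow> bool" where
  "bigraphic P Q \<longleftrightarrow> (\<exists>(V1::nat set) V2 E. realizes V1 V2 E P Q)"

definition mirror :: "'a set \<Rightarrow> 'a set \<Rightarrow> ('a \<times> 'a) set \<Rightarrow> bool" where
  "mirror V1 V2 E \<longleftrightarrow> (\<exists>\<phi>. bij_betw \<phi> V1 V2 \<and>
      (\<forall>u\<in>V1. \<forall>v\<in>V1. (u, \<phi> v) \<in> E \<longleftrightarrow> (v, \<phi> u) \<in> E))"

definition Pseq :: "nat \<Rightarrow> nat list" where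
  "Pseq n = rev [1..<n+1]"

end

theory Submission
  imports Defs
begin

text \<open>If both sides have the degrees n, n-1, ..., 1 then the vertex x of degree n in V1 is
adjacent to all of V2, and the vertex y of degree 1 in V2 is adjacent only to x. Deleting x
and y leaves the same situation for n - 1, with the degrees in V1 unchanged and those in V2
lowered by one. By induction, u and w are adjacent exactly when deg u + deg w > n. Hence
matching each vertex of V1 with the vertex of V2 of the same degree is a mirror bijection,
and the same threshold rule, on {1..n} and {n+1..2n}, gives a realization.\<close>

definition staircase :: "'a set \<Rightarrow> 'a set \<Rightarrow> ('a \<times> 'a) set \<Rightarrow> nat \<Rightarrow> bool" where
  "staircase V1 V2 E n \<longleftrightarrow> E \<subseteq> V1 \<times> V2
     \<and> bij_betw (deg1 E) V1 {1..n} \<and> bij_betw (deg2 E) V2 {1..n}"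

lemma mset_Pseq: "mset (Pseq n) = mset_set {1..n}"
proof -
  have "{1..<n+1} = {1..n}" by auto
  then show ?thesis by (simp only: Pseq_def mset_rev mset_upt)
qed

lemma bij_betw_iff_image_mset_mset_set:
  assumes "finite A" "finite B"
  shows "bij_betw f A B \<longleftrightarrow> image_mset f (mset_set A) = mset_set B"
proof
  assume "bij_betw f A B"
  then show "image_mset f (mset_set A) = mset_set B"
    by (simp add: bij_betw_def image_mset_mset_set)
next
  assume eq: "image_mset f (mset_set A) = mset_set B"
  have "f ` A = B" using arg_cong[OF eq, of set_mset] assms by simp
  moreover have "card A = card B" using arg_cong[OF eq, of size] by simp
  ultimately show "bij_betw f A B"
    using assms by (simp add: bij_betw_def eq_card_imp_inj_on)
qed

lemma realizes_Pseq_iff: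
  "realizes V1 V2 E (Pseq n) (Pseq n) \<longleftrightarrow> V1 \<inter> V2 = {} \<and> staircase V1 V2 E n"
proof
  assume "realizes V1 V2 E (Pseq n) (Pseq n)"
  then have "finite V1" "finite V2" "V1 \<inter> V2 = {}" "E \<subseteq> V1 \<times> V2"
    "image_mset (deg1 E) (mset_set V1) = mset_set {1..n}"
    "image_mset (deg2 E) (mset_set V2) = mset_set {1..n}"
    by (simp_all add: realizes_def bipartite_graph_def mset_Pseq)
  then show "V1 \<inter> V2 = {} \<and> staircase V1 V2 E n"
    by (simp add: staircase_def bij_betw_iff_image_mset_mset_set)
next
  assume "V1 \<inter> V2 = {} \<and> staircase V1 V2 E n"
  moreover from this have "finite V1" "finite V2"
    by (auto simp: staircase_def dest: bij_betw_finite)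
  ultimately show "realizes V1 V2 E (Pseq n) (Pseq n)"
    by (simp add: realizes_def bipartite_graph_def staircase_def mset_Pseq
        flip: bij_betw_iff_image_mset_mset_set)
qed

lemma bij_betw_remove_max:
  assumes "bij_betw f A {1..Suc n}" "a \<in> A" "f a = Suc n"
  shows "bij_betw f (A - {a}) {1..n}"
proof -
  have "bij_betw f (A - {a}) ({1..Suc n} - {Suc n})"
    using bij_betw_DiffI[OF assms(1), of "{a}" "{Suc n}"] assms by (simp add: bij_betw_def)
  moreover have "{1..Suc n} - {Suc n} = {1..n}" by auto
  ultimately show ?thesis by simp
qed

lemma bij_betw_remove_min:
  assumes "bij_betw f A {1..Suc n}" "a \<in> A" "f a = 1"
  shows "bij_betw (\<lambda>x. f x - 1) (A - {a}) {1..n}"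
proof -
  have "bij_betw f (A - {a}) ({1..Suc n} - {1})"
    using bij_betw_DiffI[OF assms(1), of "{a}" "{1}"] assms by (simp add: bij_betw_def)
  moreover have "bij_betw (\<lambda>k. k - 1) ({1..Suc n} - {1}) {1..n}"
    by (rule bij_betw_byWitness[where f' = Suc]) auto
  ultimately show ?thesis using bij_betw_trans by (fastforce simp: comp_def)
qed

lemma deg1_Int_Times: "u \<in> A \<Longrightarrow> deg1 (E \<inter> A \<times> B) u = card ({w. (u, w) \<in> E} \<inter> B)"
  unfolding deg1_def by (rule arg_cong[where f = card]) auto

lemma deg2_Int_Times: "w \<in> B \<Longrightarrow> deg2 (E \<inter> A \<times> B) w = card ({u. (u, w) \<in> E} \<inter> A)"
  unfolding deg2_def by (rule arg_cong[where f = card]) auto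

lemma staircase_max_degree_adjacent:
  assumes "staircase V1 V2 E n" "x \<in> V1" "deg1 E x = n" "w \<in> V2"
  shows "(x, w) \<in> E"
proof -
  have "{w. (x, w) \<in> E} = V2"
  proof (rule card_subset_eq)
    show "finite V2" "{w. (x, w) \<in> E} \<subseteq> V2"
      using assms(1) by (auto simp: staircase_def dest: bij_betw_finite)
    have "card V2 = n" using assms(1) bij_betw_same_card by (fastforce simp: staircase_def)
    then show "card {w. (x, w) \<in> E} = card V2" using assms(3) by (simp add: deg1_def)
  qed
  then show ?thesis using assms(4) by blast
qed

lemma staircase_min_degree_neighbour:
  assumes "staircase V1 V2 E n" "x \<in> V1" "deg1 E x = n" "y \<in> V2" "deg2 E y = 1"
  shows "{u. (u, y) \<in> E} = {x}"
proof -
  obtain z where "{u. (u, y) \<in> E} = {z}"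
    using assms(5) card_1_singletonE unfolding deg2_def by blast
  moreover have "(x, y) \<in> E" using staircase_max_degree_adjacent assms(1-4) .
  ultimately show ?thesis by auto
qed

lemma staircase_reduce:
  assumes st: "staircase V1 V2 E (Suc n)"
    and x: "x \<in> V1" "deg1 E x = Suc n" and y: "y \<in> V2" "deg2 E y = 1"
  defines "E' \<equiv> E \<inter> (V1 - {x}) \<times> (V2 - {y})"
  shows "staircase (V1 - {x}) (V2 - {y}) E' n"
    and "\<And>u. u \<in> V1 - {x} \<Longrightarrow> deg1 E' u = deg1 E u"
    and "\<And>w. w \<in> V2 - {y} \<Longrightarrow> deg2 E' w = deg2 E w - 1"
proof -
  have sub: "E \<subseteq> V1 \<times> V2" and fin1: "finite V1"
    and b1: "bij_betw (deg1 E) V1 {1..Suc n}" and b2: "bij_betw (deg2 E) V2 {1..Suc n}"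
    using st by (auto simp: staircase_def dest: bij_betw_finite)
  have Ny: "{u. (u, y) \<in> E} = {x}"
    using staircase_min_degree_neighbour[OF st x y] .
  show d1: "deg1 E' u = deg1 E u" if "u \<in> V1 - {x}" for u
  proof -
    have "{w. (u, w) \<in> E} \<inter> (V2 - {y}) = {w. (u, w) \<in> E}" using that sub Ny by auto
    then show ?thesis using that by (simp add: E'_def deg1_Int_Times deg1_def[of E])
  qed
  show d2: "deg2 E' w = deg2 E w - 1" if "w \<in> V2 - {y}" for w
  proof -
    have "{u. (u, w) \<in> E} \<inter> (V1 - {x}) = {u. (u, w) \<in> E} - {x}" using that sub by auto
    moreover have "(x, w) \<in> E" using staircase_max_degree_adjacent[OF st x] that by simp
    moreover have "finite {u. (u, w) \<in> E}" by (rule finite_subset[OF _ fin1]) (use sub in auto)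
    ultimately show ?thesis using that by (simp add: E'_def deg2_Int_Times deg2_def[of E])
  qed
  have "bij_betw (deg1 E') (V1 - {x}) {1..n}"
    by (rule bij_betw_cong[THEN iffD2, OF d1 bij_betw_remove_max[OF b1 x]])
  moreover have "bij_betw (deg2 E') (V2 - {y}) {1..n}"
    by (rule bij_betw_cong[THEN iffD2, OF d2 bij_betw_remove_min[OF b2 y]])
  ultimately show "staircase (V1 - {x}) (V2 - {y}) E' n"
    by (simp add: staircase_def E'_def)
qed

lemma staircase_edge_iff:
  assumes "staircase V1 V2 E n" "u \<in> V1" "w \<in> V2"
  shows "(u, w) \<in> E \<longleftrightarrow> n < deg1 E u + deg2 E w"
  using assms
proof (induction n arbitrary: V1 V2 E u w)
  case 0
  then show ?case by (auto simp: staircase_def bij_betw_def)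
next
  case (Suc n)
  have b1: "bij_betw (deg1 E) V1 {1..Suc n}" and b2: "bij_betw (deg2 E) V2 {1..Suc n}"
    using Suc.prems(1) by (auto simp: staircase_def)
  have "Suc n \<in> deg1 E ` V1" "1 \<in> deg2 E ` V2"
    using b1 b2 by (simp_all add: bij_betw_def)
  then obtain x y where x: "x \<in> V1" "deg1 E x = Suc n" and y: "y \<in> V2" "deg2 E y = 1"
    by (metis imageE)
  have du: "deg1 E u \<in> {1..Suc n}" and dw: "deg2 E w \<in> {1..Suc n}"
    using b1 b2 Suc.prems(2,3) by (auto dest: bij_betwE)
  consider "u = x" | "u \<noteq> x" "w = y" | "u \<noteq> x" "w \<noteq> y" by blast
  then show ?case
  proof cases
    case 1
    then show ?thesis
      using staircase_max_degree_adjacent[OF Suc.prems(1) x] Suc.prems(3) x(2) dw by auto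
  next
    case 2
    have "deg1 E u \<noteq> Suc n"
      using 2 x b1 Suc.prems(2) by (metis bij_betw_def inj_on_contraD)
    then show ?thesis
      using 2 staircase_min_degree_neighbour[OF Suc.prems(1) x y] du y(2) by auto
  next
    case 3
    let ?E' = "E \<inter> (V1 - {x}) \<times> (V2 - {y})"
    have u': "u \<in> V1 - {x}" and w': "w \<in> V2 - {y}" using 3 Suc.prems(2,3) by auto
    have "deg2 E w \<noteq> 1"
      using 3 y b2 Suc.prems(3) by (metis bij_betw_def inj_on_contraD)
    have "(u, w) \<in> E \<longleftrightarrow> (u, w) \<in> ?E'" using u' w' by auto
    also have "\<dots> \<longleftrightarrow> n < deg1 ?E' u + deg2 ?E' w"
      using Suc.IH[OF staircase_reduce(1)[OF Suc.prems(1) x y] u' w'] .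
    also have "\<dots> \<longleftrightarrow> Suc n < deg1 E u + deg2 E w"
      using staircase_reduce(2,3)[OF Suc.prems(1) x y] u' w' dw \<open>deg2 E w \<noteq> 1\<close> by auto
    finally show ?thesis .
  qed
qed

lemma staircase_mirror:
  assumes "staircase V1 V2 E n"
  shows "mirror V1 V2 E"
proof -
  have b1: "bij_betw (deg1 E) V1 {1..n}" and b2: "bij_betw (deg2 E) V2 {1..n}"
    using assms by (auto simp: staircase_def)
  define \<phi> where "\<phi> = the_inv_into V2 (deg2 E) \<circ> deg1 E"
  have bij: "bij_betw \<phi> V1 V2"
    unfolding \<phi>_def using b1 bij_betw_the_inv_into[OF b2] by (rule bij_betw_trans)
  have deg: "deg2 E (\<phi> v) = deg1 E v" if "v \<in> V1" for v
  proof -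
    have "deg1 E v \<in> deg2 E ` V2" using b1 b2 that by (auto simp: bij_betw_def)
    then show ?thesis using b2 unfolding \<phi>_def by (simp add: bij_betw_def f_the_inv_into_f)
  qed
  have "(u, \<phi> v) \<in> E \<longleftrightarrow> (v, \<phi> u) \<in> E" if "u \<in> V1" "v \<in> V1" for u v
    using staircase_edge_iff[OF assms] bij_betwE[OF bij] deg that by (simp add: add.commute)
  then show ?thesis using bij unfolding mirror_def by blast
qed

lemma staircase_threshold_graph:
  "staircase {1..n} {n+1..2*n} {(i, k). i \<in> {1..n} \<and> k \<in> {n+1..2*n} \<and> 2*n < i + k} n"
  (is "staircase ?A ?B ?F n")
proof -
  have "deg1 ?F i = i" if "i \<in> ?A" for i
  proof -
    have "{k. (i, k) \<in> ?F} = {2*n + 1 - i..2*n}" using that by auto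
    then show ?thesis using that by (simp add: deg1_def)
  qed
  then have "bij_betw (deg1 ?F) ?A ?A" using bij_betw_cong[of ?A _ id] by simp
  moreover have "deg2 ?F k = k - n" if "k \<in> ?B" for k
  proof -
    have "{i. (i, k) \<in> ?F} = {2*n + 1 - k..n}" using that by auto
    then show ?thesis using that by (simp add: deg2_def)
  qed
  moreover have "bij_betw (\<lambda>k. k - n) ?B ?A"
    by (rule bij_betw_byWitness[where f' = "\<lambda>j. j + n"]) auto
  ultimately show ?thesis
    using bij_betw_cong[of ?B "deg2 ?F" "\<lambda>k. k - n"] by (auto simp: staircase_def)
qed

theorem lemma3:
  fixes n :: nat and V1 V2 :: "'a set" and E :: "('a \<times> 'a) set"
  assumes "n \<ge> 1"
  shows "bigraphic (Pseq n) (Pseq n) \<and>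
         (realizes V1 V2 E (Pseq n) (Pseq n) \<longrightarrow> mirror V1 V2 E)"
proof
  have "{1..n} \<inter> {n+1..2*n} = ({} :: nat set)" by auto
  then have "realizes {1..n} {n+1..2*n}
      {(i, k). i \<in> {1..n} \<and> k \<in> {n+1..2*n} \<and> 2*n < i + k} (Pseq n) (Pseq n)"
    using staircase_threshold_graph by (simp add: realizes_Pseq_iff)
  then show "bigraphic (Pseq n) (Pseq n)" unfolding bigraphic_def by blast
  show "realizes V1 V2 E (Pseq n) (Pseq n) \<longrightarrow> mirror V1 V2 E"
    using realizes_Pseq_iff[of V1 V2 E n] staircase_mirror[of V1 V2 E n] by blast
qed

end
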